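(* Let $T_1,T_2>0$ and $0<\tau<2\min(T_1,T_2)$. Let $R_1=\tau/\sqrt2$, $R_2=R_1+\tau$, $c_0=(T_1+\tau/2+R_1,\,T_2+\tau/2+R_1)$. For $p=(p_1,p_2)\in\mathbb{R}^2$ define the regions $S_{1,\alpha}=\{T_1+\tfrac\tau2<p_1<T_1+\tfrac\tau2+R_1,\ T_2+\tfrac\tau2<p_2<T_2+\tfrac\tau2+R_1,\ \|p-c_0\|<R_1\}$, $S_{1,1}=\{T_1+\tfrac\tau2<p_1<T_1+\tfrac\tau2+R_1,\ p_2>T_2+\tfrac\tau2+R_1\}$, $S_{1,2}=\{T_2+\tfrac\tau2<p_2<T_2+\tfrac\tau2+R_1,\ p_1>T_1+\tfrac\tau2+R_1\}$, $S_{1,3}=\{p_1>T_1+\tfrac\tau2+R_1,\ p_2>T_2+\tfrac\tau2+R_1\}$, $S_{0,\alpha}=\{p_1\le T_1+\tfrac\tau2+R_1,\ p_2\le T_2+\tfrac\tau2+R_1,\ \|p-c_0\|>R_2\}$, $S_{0,1}=\{p_1\le T_1-\tfrac\tau2,\ p_2>T_2+\tfrac\tau2+R_1\}$, $S_{0,2}=\{p_2\le T_2-\tfrac\tau2,\ p_1>T_1+\tfrac\tau2+R_1\}$, $S_{\tau,\alpha}=\{p_1\le T_1+\tfrac\tau2+R_1,\ p_2\le T_2+\tfrac\tau2+R_1,\ R_1\le\|p-c_0\|\le R_2\}$, $S_{\tau,1}=\{T_1-\tfrac\tau2\le p_1\le T_1+\tfrac\tau2,\ p_2>T_2+\tfrac\tau2+R_1\}$,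 $S_{\tau,2}=\{T_2-\tfrac\tau2\le p_2\le T_2+\tfrac\tau2,\ p_1>T_1+\tfrac\tau2+R_1\}$, and define $f_\tau(p)=1$ on $S_{1,\alpha}\cup S_{1,1}\cup S_{1,2}\cup S_{1,3}$, $f_\tau(p)=0$ on $S_{0,\alpha}\cup S_{0,1}\cup S_{0,2}$, $f_\tau(p)=\frac{R_2-\|p-c_0\|}{\tau}$ on $S_{\tau,\alpha}$, $f_\tau(p)=\frac{p_1-(T_1-\tau/2)}{\tau}$ on $S_{\tau,1}$, $f_\tau(p)=\frac{p_2-(T_2-\tau/2)}{\tau}$ on $S_{\tau,2}$. Then $f_\tau$ is $\frac1\tau$-Lipschitz with respect to the Euclidean norm: $|f_\tau(x)-f_\tau(x')|\le\frac1\tau\|x-x'\|$ for all $x,x'$ in the union of these regions.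
   Context: $\|\cdot\|$ is the Euclidean norm on $\mathbb{R}^2$. *)

theory Defs
  imports "HOL-Analysis.Analysis"
begin

text \<open>Points of R^2 are pairs (p1,p2) :: real \<times> real; the norm on the product type
is the Euclidean norm sqrt(p1^2+p2^2).\<close>

definition R1 :: "real \<Rightarrow> real" where "R1 \<tau> = \<tau> / sqrt 2"
definition R2 :: "real \<Rightarrow> real" where "R2 \<tau> = R1 \<tau> + \<tau>"
definition c0 :: "real \<Rightarrow> real \<Rightarrow> real \<Rightarrow> real \<times> real" where
  "c0 T1 T2 \<tau> = (T1 + \<tau>/2 + R1 \<tau>, T2 + \<tau>/2 + R1 \<tau>)"

definition S1a :: "real \<Rightarrow> real \<Rightarrow> real \<Rightarrow> (real \<times> real) set" where
  "S1a T1 T2 \<tau> = {p. T1 + \<tau>/2 < fst p \<and> fst p < T1 + \<tau>/2 + R1 \<tau> \<and>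
     T2 + \<tau>/2 < snd p \<and> snd p < T2 + \<tau>/2 + R1 \<tau> \<and> norm (p - c0 T1 T2 \<tau>) < R1 \<tau>}"
definition S11 :: "real \<Rightarrow> real \<Rightarrow> real \<Rightarrow> (real \<times> real) set" where
  "S11 T1 T2 \<tau> = {p. T1 + \<tau>/2 < fst p \<and> fst p < T1 + \<tau>/2 + R1 \<tau> \<and> snd p > T2 + \<tau>/2 + R1 \<tau>}"
definition S12 :: "real \<Rightarrow> real \<Rightarrow> real \<Rightarrow> (real \<times> real) set" where
  "S12 T1 T2 \<tau> = {p. T2 + \<tau>/2 < snd p \<and> snd p < T2 + \<tau>/2 + R1 \<tau> \<and> fst p > T1 + \<tau>/2 + R1 \<tau>}"
definition S13 :: "real \<Rightarrow> real \<Rightarrow> real \<Rightarrow> (real \<times> real) set" where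
  "S13 T1 T2 \<tau> = {p. fst p > T1 + \<tau>/2 + R1 \<tau> \<and> snd p > T2 + \<tau>/2 + R1 \<tau>}"
definition S0a :: "real \<Rightarrow> real \<Rightarrow> real \<Rightarrow> (real \<times> real) set" where
  "S0a T1 T2 \<tau> = {p. fst p \<le> T1 + \<tau>/2 + R1 \<tau> \<and> snd p \<le> T2 + \<tau>/2 + R1 \<tau> \<and>
     norm (p - c0 T1 T2 \<tau>) > R2 \<tau>}"
definition S01 :: "real \<Rightarrow> real \<Rightarrow> real \<Rightarrow> (real \<times> real) set" where
  "S01 T1 T2 \<tau> = {p. fst p \<le> T1 - \<tau>/2 \<and> snd p > T2 + \<tau>/2 + R1 \<tau>}"
definition S02 :: "real \<Rightarrow> real \<Rightarrow> real \<Rightarrow> (real \<times> real) set" where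
  "S02 T1 T2 \<tau> = {p. snd p \<le> T2 - \<tau>/2 \<and> fst p > T1 + \<tau>/2 + R1 \<tau>}"
definition Sta :: "real \<Rightarrow> real \<Rightarrow> real \<Rightarrow> (real \<times> real) set" where
  "Sta T1 T2 \<tau> = {p. fst p \<le> T1 + \<tau>/2 + R1 \<tau> \<and> snd p \<le> T2 + \<tau>/2 + R1 \<tau> \<and>
     R1 \<tau> \<le> norm (p - c0 T1 T2 \<tau>) \<and> norm (p - c0 T1 T2 \<tau>) \<le> R2 \<tau>}"
definition St1 :: "real \<Rightarrow> real \<Rightarrow> real \<Rightarrow> (real \<times> real) set" where
  "St1 T1 T2 \<tau> = {p. T1 - \<tau>/2 \<le> fst p \<and> fst p \<le> T1 + \<tau>/2 \<and> snd p > T2 + \<tau>/2 + R1 \<tau>}"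
definition St2 :: "real \<Rightarrow> real \<Rightarrow> real \<Rightarrow> (real \<times> real) set" where
  "St2 T1 T2 \<tau> = {p. T2 - \<tau>/2 \<le> snd p \<and> snd p \<le> T2 + \<tau>/2 \<and> fst p > T1 + \<tau>/2 + R1 \<tau>}"

definition Sall :: "real \<Rightarrow> real \<Rightarrow> real \<Rightarrow> (real \<times> real) set" where
  "Sall T1 T2 \<tau> = S1a T1 T2 \<tau> \<union> S11 T1 T2 \<tau> \<union> S12 T1 T2 \<tau> \<union> S13 T1 T2 \<tau>
     \<union> S0a T1 T2 \<tau> \<union> S01 T1 T2 \<tau> \<union> S02 T1 T2 \<tau>
     \<union> Sta T1 T2 \<tau> \<union> St1 T1 T2 \<tau> \<union> St2 T1 T2 \<tau>"

text \<open>The regions are pairwise disjoint (under the hypotheses), so the case order is immaterial;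
outside their union f is given the arbitrary value 0, which is never used.\<close>
definition f_tau :: "real \<Rightarrow> real \<Rightarrow> real \<Rightarrow> real \<times> real \<Rightarrow> real" where
  "f_tau T1 T2 \<tau> p =
    (if p \<in> S1a T1 T2 \<tau> \<union> S11 T1 T2 \<tau> \<union> S12 T1 T2 \<tau> \<union> S13 T1 T2 \<tau> then 1
     else if p \<in> S0a T1 T2 \<tau> \<union> S01 T1 T2 \<tau> \<union> S02 T1 T2 \<tau> then 0
     else if p \<in> Sta T1 T2 \<tau> then (R2 \<tau> - norm (p - c0 T1 T2 \<tau>)) / \<tau>
     else if p \<in> St1 T1 T2 \<tau> then (fst p - (T1 - \<tau>/2)) / \<tau>
     else if p \<in> St2 T1 T2 \<tau> then (snd p - (T2 - \<tau>/2)) / \<tau>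
     else 0)"

end

theory Submission
  imports Defs
begin

(* On the union of the regions, f_tau coincides with the clamp to [0,1] of (R2 - d)/\<tau>, where d is
   the Euclidean distance to the closed quadrant with corner c0: d vanishes on that quadrant, is the
   distance to c0 below and left of the corner, and the distance to an edge of the quadrant on
   the two strips.  Distance to a set and clamping are both 1-Lipschitz. *)

definition upper_quadrant :: "real \<times> real \<Rightarrow> (real \<times> real) set" where
  "upper_quadrant c = {q. fst c \<le> fst q \<and> snd c \<le> snd q}"

lemma norm_Pair_mono:
  fixes a b c d :: real
  assumes "\<bar>a\<bar> \<le> \<bar>c\<bar>" and "\<bar>b\<bar> \<le> \<bar>d\<bar>"
  shows "norm (a, b) \<le> norm (c, d)"
  unfolding norm_Pair
proof (rule real_sqrt_le_mono, rule add_mono)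
  show "(norm a)\<^sup>2 \<le> (norm c)\<^sup>2" "(norm b)\<^sup>2 \<le> (norm d)\<^sup>2"
    using assms by (simp_all add: abs_le_square_iff[symmetric])
qed

lemma infdist_upper_quadrant:
  "infdist p (upper_quadrant c) = norm (max 0 (fst c - fst p), max 0 (snd c - snd p))"
proof -
  define q where "q = (max (fst c) (fst p), max (snd c) (snd p))"
  have q_in: "q \<in> upper_quadrant c"
    by (simp add: q_def upper_quadrant_def)
  have "q - p = (max 0 (fst c - fst p), max 0 (snd c - snd p))"
    by (simp add: q_def prod_eq_iff max_def)
  then have dist_q: "dist p q = norm (max 0 (fst c - fst p), max 0 (snd c - snd p))"
    by (metis dist_commute dist_norm)
  have nearest: "dist p q \<le> dist p q'" if "q' \<in> upper_quadrant c" for q'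
    using that unfolding dist_norm q_def upper_quadrant_def
    by (cases p, cases q') (auto intro!: norm_Pair_mono)
  have nonempty: "upper_quadrant c \<noteq> {}"
    using q_in by blast
  have "dist p q \<le> infdist p (upper_quadrant c)"
    unfolding infdist_notempty[OF nonempty] by (rule cINF_greatest[OF nonempty nearest])
  with infdist_le[OF q_in, of p] dist_q show ?thesis
    by linarith
qed

lemma infdist_upper_quadrant_below_corner:
  assumes "fst p \<le> fst c" and "snd p \<le> snd c"
  shows "infdist p (upper_quadrant c) = dist p c"
  using assms by (simp add: infdist_upper_quadrant dist_prod_def norm_Pair dist_real_def max_def)

lemma infdist_upper_quadrant_left_edge:
  assumes "fst p \<le> fst c" and "snd c \<le> snd p"
  shows "infdist p (upper_quadrant c) = fst c - fst p"
  using assms by (simp add: infdist_upper_quadrant norm_Pair max_def)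

lemma infdist_upper_quadrant_lower_edge:
  assumes "snd p \<le> snd c" and "fst c \<le> fst p"
  shows "infdist p (upper_quadrant c) = snd c - snd p"
  using assms by (simp add: infdist_upper_quadrant norm_Pair max_def)

lemma clamp_unit_interval_real: "clamp 0 1 (t::real) = max 0 (min 1 t)"
  unfolding clamp_def Basis_real_def by auto

lemma lipschitz_on_clamp_infdist:
  fixes A :: "'a::metric_space set"
  assumes "\<tau> > 0"
  shows "(1/\<tau>)-lipschitz_on U (\<lambda>p. clamp 0 1 ((r - infdist p A) / \<tau>))"
proof (rule lipschitz_onI)
  fix x y
  have "dist (clamp 0 1 ((r - infdist x A) / \<tau>)) (clamp 0 1 ((r - infdist y A) / \<tau>))
      \<le> dist ((r - infdist x A) / \<tau>) ((r - infdist y A) / \<tau>)"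
    by (rule dist_clamps_le_dist_args)
  also have "\<dots> = \<bar>infdist x A - infdist y A\<bar> / \<tau>"
    using assms by (simp add: dist_real_def diff_divide_distrib[symmetric] abs_minus_commute)
  also have "\<dots> \<le> (1/\<tau>) * dist x y"
    using assms infdist_triangle_abs[of x A y] by (simp add: divide_right_mono)
  finally show "dist (clamp 0 1 ((r - infdist x A) / \<tau>)) (clamp 0 1 ((r - infdist y A) / \<tau>))
      \<le> (1/\<tau>) * dist x y" .
qed (use assms in simp)

lemma f_tau_eq_clamp_infdist:
  assumes "\<tau> > 0" and "p \<in> Sall T1 T2 \<tau>"
  shows "f_tau T1 T2 \<tau> p = clamp 0 1 ((R2 \<tau> - infdist p (upper_quadrant (c0 T1 T2 \<tau>))) / \<tau>)"
proof -
  define d where "d = infdist p (upper_quadrant (c0 T1 T2 \<tau>))"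
  have "R1 \<tau> > 0"
    using assms(1) by (simp add: R1_def)
  have clamp_one: "clamp 0 1 ((R2 \<tau> - d) / \<tau>) = 1" if "d \<le> R1 \<tau>"
    using that assms(1) by (simp add: clamp_unit_interval_real R2_def field_simps)
  have clamp_zero: "clamp 0 1 ((R2 \<tau> - d) / \<tau>) = 0" if "R2 \<tau> \<le> d"
    using that assms(1) by (simp add: clamp_unit_interval_real field_simps)
  have clamp_ramp: "clamp 0 1 ((R2 \<tau> - d) / \<tau>) = (R2 \<tau> - d) / \<tau>" if "R1 \<tau> \<le> d" "d \<le> R2 \<tau>"
    using that assms(1) by (simp add: clamp_unit_interval_real R2_def field_simps)
  note corner = infdist_upper_quadrant_below_corner[of p "c0 T1 T2 \<tau>", folded d_def]
   and left = infdist_upper_quadrant_left_edge[of p "c0 T1 T2 \<tau>", folded d_def]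
   and lower = infdist_upper_quadrant_lower_edge[of p "c0 T1 T2 \<tau>", folded d_def]
  have in_S1: "clamp 0 1 ((R2 \<tau> - d) / \<tau>) = 1"
    if "p \<in> S1a T1 T2 \<tau> \<union> S11 T1 T2 \<tau> \<union> S12 T1 T2 \<tau> \<union> S13 T1 T2 \<tau>"
  proof (rule clamp_one)
    have "p \<in> upper_quadrant (c0 T1 T2 \<tau>)" if "p \<in> S13 T1 T2 \<tau>"
      using that by (simp add: S13_def upper_quadrant_def c0_def)
    with that \<open>R1 \<tau> > 0\<close> corner left lower show "d \<le> R1 \<tau>"
      by (auto simp: d_def S1a_def S11_def S12_def c0_def dist_norm)
  qed
  have in_S0: "clamp 0 1 ((R2 \<tau> - d) / \<tau>) = 0"
    if "p \<in> S0a T1 T2 \<tau> \<union> S01 T1 T2 \<tau> \<union> S02 T1 T2 \<tau>"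
    using that assms(1) \<open>R1 \<tau> > 0\<close> corner left lower
    by (intro clamp_zero) (auto simp: S0a_def S01_def S02_def c0_def R2_def dist_norm)
  have in_Sta: "clamp 0 1 ((R2 \<tau> - d) / \<tau>) = (R2 \<tau> - norm (p - c0 T1 T2 \<tau>)) / \<tau>"
    if "p \<in> Sta T1 T2 \<tau>"
    using that corner clamp_ramp by (simp add: Sta_def c0_def dist_norm)
  have in_St1: "clamp 0 1 ((R2 \<tau> - d) / \<tau>) = (fst p - (T1 - \<tau>/2)) / \<tau>"
    if "p \<in> St1 T1 T2 \<tau>"
    using that \<open>R1 \<tau> > 0\<close> left clamp_ramp by (auto simp: St1_def c0_def R2_def)
  have in_St2: "clamp 0 1 ((R2 \<tau> - d) / \<tau>) = (snd p - (T2 - \<tau>/2)) / \<tau>"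
    if "p \<in> St2 T1 T2 \<tau>"
    using that \<open>R1 \<tau> > 0\<close> lower clamp_ramp by (auto simp: St2_def c0_def R2_def)
  show ?thesis
    using assms(2) in_S1 in_S0 in_Sta in_St1 in_St2
    unfolding d_def[symmetric] f_tau_def Sall_def by auto
qed

theorem mainTheorem9:
  fixes T1 T2 \<tau> :: real
  assumes "T1 > 0" and "T2 > 0" and "0 < \<tau>" and "\<tau> < 2 * min T1 T2"
  shows "\<forall>x \<in> Sall T1 T2 \<tau>. \<forall>x' \<in> Sall T1 T2 \<tau>.
           \<bar>f_tau T1 T2 \<tau> x - f_tau T1 T2 \<tau> x'\<bar> \<le> (1 / \<tau>) * norm (x - x')"
proof (intro ballI)
  fix x x' assume "x \<in> Sall T1 T2 \<tau>" "x' \<in> Sall T1 T2 \<tau>"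
  define g where "g p = clamp 0 1 ((R2 \<tau> - infdist p (upper_quadrant (c0 T1 T2 \<tau>))) / \<tau>)" for p
  have "(1/\<tau>)-lipschitz_on UNIV g"
    unfolding g_def using assms(3) by (rule lipschitz_on_clamp_infdist)
  with \<open>x \<in> Sall T1 T2 \<tau>\<close> \<open>x' \<in> Sall T1 T2 \<tau>\<close>
  show "\<bar>f_tau T1 T2 \<tau> x - f_tau T1 T2 \<tau> x'\<bar> \<le> (1 / \<tau>) * norm (x - x')"
    using lipschitz_onD[of "1/\<tau>" UNIV g x x'] f_tau_eq_clamp_infdist[OF assms(3)]
    by (simp add: g_def dist_real_def dist_norm)
qed

end
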